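(* Let $H$ be a complex Hilbert space and $\{\mathcal{U}(t)\}_{t\geq 0}$ a strongly continuous semigroup on $H$ with generator $\mathcal{L}$. Let $z\in D(\mathcal{L}^\dagger)$ with $z\neq0$, $\mathcal{P}:=(\cdot,z)(z,z)^{-1}z$, $\mathcal{Q}:=1-\mathcal{P}$, and let $x\in H$. Let $f(x,\cdot):\mathbb{R}_+\to\mathbb{C}$ be the unique continuous solution of the Volterra equation $$f(x,t)=(\mathcal{U}(t)\mathcal{Q}x,\mathcal{Q}\mathcal{L}^\dagger z)(z,z)^{-1}-\int_0^tf(x,t-s)\,(\mathcal{U}(s)z,\mathcal{Q}\mathcal{L}^\dagger z)(z,z)^{-1}\,ds,$$ and define $u(x,t):=\mathcal{P}x+\mathcal{U}(t)\mathcal{Q}x-\int_0^tf(x,t-s)\,\mathcal{U}(s)z\,ds$ for $t\ge0$. Then $u(x,\cdot)$ is a mild solution of the abstract Cauchy problem associated to $\overline{\mathcal{QL}}\mathcal{Q}$, i.e. $t\mapsto u(x,t)$ is continuous, and for every $t\ge0$, $\int_0^tu(x,s)\,ds\in D(\overline{\mathcal{QL}}\mathcal{Q})$ and $u(x,t)=x+\overline{\mathcal{QL}}\mathcal{Q}\int_0^tu(x,s)\,ds$.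
   Context: The scalar product $(\cdot,\cdot)$ on $H$ is conjugate-linear in its second argument. The generator is $\mathcal{L}x:=\lim_{h\searrow 0}\frac1h[\mathcal{U}(h)x-x]$ on the set $D(\mathcal{L})$ where the limit exists; $\dagger$ denotes the adjoint, the overbar the closure (the operator $\mathcal{QL}$ is closable under these assumptions); $D(\overline{\mathcal{QL}}\mathcal{Q})=\{y:\mathcal{Q}y\in D(\overline{\mathcal{QL}})\}$. Integrals are Bochner integrals. *)

theory Defs
  imports "HOL-Analysis.Analysis"
begin

class cvector = real_vector +
  fixes scaleC :: "complex \<Rightarrow> 'a \<Rightarrow> 'a" (infixr \<open>*\<^sub>C\<close> 75)
  assumes scaleC_add_right: "a *\<^sub>C (x + y) = a *\<^sub>C x + a *\<^sub>C y"
    and scaleC_add_left: "(a + b) *\<^sub>C x = a *\<^sub>C x + b *\<^sub>C x"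
    and scaleC_scaleC: "a *\<^sub>C (b *\<^sub>C x) = (a * b) *\<^sub>C x"
    and scaleC_one: "1 *\<^sub>C x = x"
    and scaleR_scaleC: "r *\<^sub>R x = complex_of_real r *\<^sub>C x"

class chilbert = cvector + banach +
  fixes cinner :: "'a \<Rightarrow> 'a \<Rightarrow> complex"
  assumes cinner_commute: "cinner x y = cnj (cinner y x)"
    and cinner_add_left: "cinner (x + y) w = cinner x w + cinner y w"
    and cinner_scaleC_left: "cinner (a *\<^sub>C x) y = a * cinner x y"
    and cinner_nonneg: "0 \<le> Re (cinner x x)"
    and cinner_eq_zero_iff: "cinner x x = 0 \<longleftrightarrow> x = 0"
    and norm_eq_sqrt_cinner: "norm x = sqrt (Re (cinner x x))"

definition clinear_bounded :: "('a::chilbert \<Rightarrow> 'a) \<Rightarrow> bool" where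
  "clinear_bounded T \<longleftrightarrow> bounded_linear T \<and> (\<forall>c x. T (c *\<^sub>C x) = c *\<^sub>C T x)"

definition C0_semigroup :: "(real \<Rightarrow> 'a::chilbert \<Rightarrow> 'a) \<Rightarrow> bool" where
  "C0_semigroup U \<longleftrightarrow>
     (\<forall>t\<ge>0. clinear_bounded (U t)) \<and>
     U 0 = id \<and>
     (\<forall>s\<ge>0. \<forall>t\<ge>0. U (s + t) = U s \<circ> U t) \<and>
     (\<forall>x. continuous_on {0..} (\<lambda>t. U t x))"

definition generator_graph :: "(real \<Rightarrow> 'a::chilbert \<Rightarrow> 'a) \<Rightarrow> ('a \<times> 'a) set" where
  "generator_graph U = {(x, y). ((\<lambda>h. (1 / h) *\<^sub>R (U h x - x)) \<longlongrightarrow> y) (at_right 0)}"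

definition adjoint_graph :: "('a::chilbert \<times> 'a) set \<Rightarrow> ('a \<times> 'a) set" where
  "adjoint_graph G = {(y, y'). \<forall>(x, v)\<in>G. cinner v y = cinner x y'}"

definition op_of :: "('a \<times> 'b) set \<Rightarrow> 'a \<Rightarrow> 'b" where
  "op_of G x = (THE y. (x, y) \<in> G)"

definition projP :: "'a::chilbert \<Rightarrow> 'a \<Rightarrow> 'a" where
  "projP z v = (cinner v z / cinner z z) *\<^sub>C z"

definition projQ :: "'a::chilbert \<Rightarrow> 'a \<Rightarrow> 'a" where
  "projQ z v = v - projP z v"

definition QL_graph :: "(real \<Rightarrow> 'a::chilbert \<Rightarrow> 'a) \<Rightarrow> 'a \<Rightarrow> ('a \<times> 'a) set" where
  "QL_graph U z = {(x, projQ z y) | x y. (x, y) \<in> generator_graph U}"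

end

theory Submission
  imports Defs
begin

(*
  Write w = Qx, a = L^dagger z and v(t) = U(t) w - int_0^t f(t-s) U(s) z ds, so that u = Px + v.
  From the integrated form U(h)y - y = int_0^h U(s) Ly ds of the generator and Fubini for the
  convolution, int_0^t v lies in D(L) with L int_0^t v = v(t) - w + (int_0^t f) z.
  Pairing this with z through the adjoint gives, for g(t) = (v(t), z) and
  beta = conj ((a, z) / (z, z)),
    g(t) + (z,z) int_0^t f = int_0^t (v(s), a) ds = beta int_0^t g + int_0^t (v(s), Qa) ds,
  and the Volterra equation says precisely (v(s), Qa) = (z,z) f(s). Hence g = beta int g, so g = 0
  and v = Qv. Applying Q to the generator identity yields QL int_0^t v = v(t) - w = u(t) - x,
  and int_0^t v = Q int_0^t u. Finally QL is already closed: on D(L) the P-part of Ly is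
  (y, a) z / (z,z), so a limit of graph points of QL is again one.
*)

section \<open>Complex inner product spaces\<close>

lemma scaleC_zero_left [simp]: "(0::complex) *\<^sub>C (x::'a::cvector) = 0"
  by (metis add_cancel_right_right add_0 scaleC_add_left)

lemma scaleC_zero_right [simp]: "a *\<^sub>C (0::'a::cvector) = 0"
  by (metis add_cancel_right_right add_0 scaleC_add_right)

lemma scaleC_minus_right: "a *\<^sub>C (- x::'a::cvector) = - (a *\<^sub>C x)"
  by (metis add_eq_0_iff ab_left_minus scaleC_add_right scaleC_zero_right)

lemma scaleC_diff_right: "a *\<^sub>C (x - y::'a::cvector) = a *\<^sub>C x - a *\<^sub>C y"
  by (simp only: diff_conv_add_uminus scaleC_add_right scaleC_minus_right)

lemma scaleC_scaleR_commute: "a *\<^sub>C (r *\<^sub>R (x::'a::cvector)) = r *\<^sub>R (a *\<^sub>C x)"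
  by (simp only: scaleR_scaleC scaleC_scaleC mult.commute)

lemma cinner_zero_left [simp]: "cinner 0 (y::'a::chilbert) = 0"
  using cinner_add_left[of 0 0 y] by simp

lemma cinner_zero_right [simp]: "cinner (x::'a::chilbert) 0 = 0"
  by (subst cinner_commute) simp

lemma cinner_add_right: "cinner (x::'a::chilbert) (y + w) = cinner x y + cinner x w"
  by (subst (1 2 3) cinner_commute) (simp add: cinner_add_left)

lemma cinner_scaleC_right: "cinner (x::'a::chilbert) (a *\<^sub>C y) = cnj a * cinner x y"
  by (subst (1 2) cinner_commute) (simp add: cinner_scaleC_left)

lemma cinner_diff_left: "cinner (x - w::'a::chilbert) y = cinner x y - cinner w y"
  by (metis add_diff_cancel_right' cinner_add_left diff_add_cancel)

lemma cinner_diff_right: "cinner (x::'a::chilbert) (y - w) = cinner x y - cinner x w"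
  by (metis add_diff_cancel_right' cinner_add_right diff_add_cancel)

lemma cinner_scaleR_left: "cinner (r *\<^sub>R x::'a::chilbert) y = of_real r * cinner x y"
  by (simp add: scaleR_scaleC cinner_scaleC_left)

lemma cinner_self: "cinner (x::'a::chilbert) x = of_real ((norm x)\<^sup>2)"
proof -
  have "Im (cinner x x) = 0"
    using cinner_commute[of x x] by (metis cnj.simps(2) add.inverse_unique add_0 neg_equal_zero)
  moreover have "Re (cinner x x) = (norm x)\<^sup>2"
    using norm_eq_sqrt_cinner[of x] cinner_nonneg[of x] by simp
  ultimately show ?thesis by (simp add: complex_eq_iff)
qed

lemma norm_cinner_le: "cmod (cinner (x::'a::chilbert) y) \<le> norm x * norm y"
proof (cases "y = 0")
  case False
  define c where "c = cinner y y"
  define p where "p = cinner x y"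
  have c: "c = of_real ((norm y)\<^sup>2)" "norm y > 0" using False by (auto simp: c_def cinner_self)
  then have cc: "c \<noteq> 0" "cnj c = c" by auto
  have "0 \<le> Re (cinner (x - (p / c) *\<^sub>C y) (x - (p / c) *\<^sub>C y))" by (rule cinner_nonneg)
  also have "cinner (x - (p / c) *\<^sub>C y) (x - (p / c) *\<^sub>C y) = cinner x x - p * cnj p / c"
    using cc by (simp add: cinner_diff_left cinner_diff_right cinner_scaleC_left cinner_scaleC_right
        c_def p_def cinner_commute[of y x] complex_cnj_divide field_simps)
  also have "\<dots> = of_real ((norm x)\<^sup>2 - (cmod p)\<^sup>2 / (norm y)\<^sup>2)"
    by (simp add: cinner_self c complex_norm_square[symmetric])
  finally have "(cmod p)\<^sup>2 \<le> (norm x * norm y)\<^sup>2"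
    using c by (simp add: field_simps power_mult_distrib)
  then show ?thesis unfolding p_def by (simp add: power2_le_iff_abs_le)
qed simp

lemma norm_scaleC: "norm (a *\<^sub>C (x::'a::chilbert)) = cmod a * norm x"
proof -
  have "cinner (a *\<^sub>C x) (a *\<^sub>C x) = (a * cnj a) * cinner x x"
    by (simp add: cinner_scaleC_left cinner_scaleC_right mult.assoc)
  then have "of_real ((norm (a *\<^sub>C x))\<^sup>2) = (of_real ((cmod a * norm x)\<^sup>2) :: complex)"
    by (simp only: cinner_self complex_norm_square[symmetric] power_mult_distrib of_real_mult)
  then have "(norm (a *\<^sub>C x))\<^sup>2 = (cmod a * norm x)\<^sup>2"
    by (simp only: of_real_eq_iff)
  then show ?thesis by (simp add: power2_eq_iff_nonneg)
qed

lemma bounded_linear_cinner_left: "bounded_linear (\<lambda>x::'a::chilbert. cinner x y)"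
proof (rule bounded_linear_intro[where K="norm y"])
  show "cinner (r *\<^sub>R x) y = r *\<^sub>R cinner x y" for r x
    by (simp add: cinner_scaleR_left scaleR_conv_of_real)
qed (simp_all add: cinner_add_left norm_cinner_le)

lemma bounded_bilinear_scaleC: "bounded_bilinear (\<lambda>a (x::'a::chilbert). a *\<^sub>C x)"
proof
  show "\<exists>K. \<forall>a (x::'a). norm (a *\<^sub>C x) \<le> norm a * norm x * K"
    by (rule exI[where x=1]) (simp add: norm_scaleC)
qed (simp_all add: scaleC_add_left scaleC_add_right scaleR_scaleC scaleC_scaleC scaleR_conv_of_real
    scaleC_scaleR_commute mult.commute)

section \<open>Uniform boundedness\<close>

lemma Baire_closed_cover:
  fixes E :: "nat \<Rightarrow> 'a::complete_space set"
  assumes closed: "\<And>n. closed (E n)" and cover: "(\<Union>n. E n) = UNIV"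
  shows "\<exists>n. interior (E n) \<noteq> {}"
proof (rule ccontr)
  assume "\<nexists>n. interior (E n) \<noteq> {}"
  then have empty: "\<And>n. interior (E n) = {}" by blast
  have "euclidean interior_of \<Union>(range E) = {}"
  proof (rule Baire_category_alt)
    show "completely_metrizable_space (euclidean :: 'a topology) \<or>
        locally_compact_space (euclidean :: 'a topology) \<and> regular_space (euclidean :: 'a topology)"
      using completely_metrizable_space_euclidean by blast
    fix S assume "S \<in> range E"
    then obtain n where "S = E n" by blast
    then show "closedin euclidean S \<and> euclidean interior_of S = {}"
      using closed[of n] empty[of n] by (simp only: closed_closedin euclidean_interior_of)
  qed simp
  then show False using cover by simp
qed

lemma uniform_boundedness:
  fixes T :: "'i \<Rightarrow> 'a::banach \<Rightarrow> 'b::real_normed_vector"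
  assumes lin: "\<And>i. i \<in> I \<Longrightarrow> bounded_linear (T i)"
    and bdd: "\<And>x. bounded ((\<lambda>i. T i x) ` I)"
  shows "\<exists>M. \<forall>i\<in>I. \<forall>x. norm (T i x) \<le> M * norm x"
proof -
  define E where "E n = {x. \<forall>i\<in>I. norm (T i x) \<le> real n}" for n :: nat
  have closed: "closed (E n)" for n
  proof -
    have "closed {x. norm (T i x) \<le> real n}" if "i \<in> I" for i
      by (intro closed_Collect_le continuous_on_const continuous_on_norm linear_continuous_on lin that)
    moreover have "E n = (\<Inter>i\<in>I. {x. norm (T i x) \<le> real n})" by (auto simp: E_def)
    ultimately show ?thesis by auto
  qed
  have cover: "(\<Union>n. E n) = UNIV"
  proof safe
    fix x
    obtain B where "\<And>i. i \<in> I \<Longrightarrow> norm (T i x) \<le> B" using bdd[of x] by (auto simp: bounded_iff)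
    then have "x \<in> E (nat \<lceil>B\<rceil>)" by (auto simp: E_def intro: order_trans[OF _ real_nat_ceiling_ge])
    then show "x \<in> (\<Union>n. E n)" by blast
  qed simp
  from Baire_closed_cover[OF closed cover] obtain n where "interior (E n) \<noteq> {}" ..
  then obtain x0 r where r: "r > 0" "ball x0 r \<subseteq> E n"
    by (meson ex_in_conv mem_interior)
  have "norm (T i y) \<le> (4 * real n / r) * norm y" if i: "i \<in> I" for i y
  proof (cases "y = 0")
    case False
    define c where "c = (r/2) / norm y"
    have c: "c > 0" using r False by (simp add: c_def)
    have "x0 + c *\<^sub>R y \<in> ball x0 r" "x0 \<in> ball x0 r" using r False by (simp_all add: c_def dist_norm)
    then have "x0 + c *\<^sub>R y \<in> E n" "x0 \<in> E n" using r(2) by blast+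
    then have "norm (T i (x0 + c *\<^sub>R y)) \<le> real n" "norm (T i x0) \<le> real n"
      using i by (simp_all add: E_def)
    moreover have "T i (x0 + c *\<^sub>R y) - T i x0 = c *\<^sub>R T i y"
      using lin[OF i] by (simp add: linear_add linear_scale bounded_linear.linear)
    ultimately have "c * norm (T i y) \<le> 2 * real n"
      using norm_triangle_ineq4[of "T i (x0 + c *\<^sub>R y)" "T i x0"] c by simp
    then show ?thesis using c r False by (simp add: c_def field_simps)
  qed (simp add: linear_0[OF bounded_linear.linear[OF lin[OF i]]])
  then show ?thesis by blast
qed

section \<open>Calculus on real intervals\<close>

lemma integral_bounded_linear:
  assumes "bounded_linear T" "g integrable_on S"
  shows "integral S (\<lambda>s. T (g s)) = T (integral S g)"
  using integral_linear[OF assms(2,1)] by (simp add: o_def)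

lemma integral_average_tendsto:
  fixes g :: "real \<Rightarrow> 'a::banach"
  assumes g: "continuous_on {0..} g" and s: "s \<ge> 0"
  shows "((\<lambda>h. (1/h) *\<^sub>R integral {s..s+h} g) \<longlongrightarrow> g s) (at_right 0)"
proof (rule tendstoI)
  fix e :: real assume e: "e > 0"
  have "continuous (at s within {0..}) g" using g s by (simp add: continuous_on_eq_continuous_within)
  then obtain d where d: "d > 0" "\<And>x. x \<ge> 0 \<Longrightarrow> dist x s < d \<Longrightarrow> dist (g x) (g s) < e/2"
    using e unfolding continuous_within_eps_delta by (meson atLeast_iff half_gt_zero)
  show "\<forall>\<^sub>F h in at_right 0. dist ((1/h) *\<^sub>R integral {s..s+h} g) (g s) < e"
    unfolding eventually_at_right_field
  proof (intro exI[of _ d] conjI allI impI)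
    fix h :: real assume h: "0 < h" "h < d"
    have cg: "continuous_on {s..s+h} g" using continuous_on_subset[OF g] s by auto
    have "integral {s..s+h} g - h *\<^sub>R g s = integral {s..s+h} (\<lambda>x. g x - g s)"
      using h by (subst integral_diff) (auto intro!: integrable_continuous_real cg)
    also have "norm \<dots> \<le> (e/2) * (s + h - s)"
    proof (rule integral_bound)
      fix x assume "x \<in> {s..s+h}"
      then show "norm (g x - g s) \<le> e/2" using d(2)[of x] h s by (auto simp: dist_norm)
    qed (use h cg in \<open>auto intro!: continuous_intros\<close>)
    finally have "norm (integral {s..s+h} g - h *\<^sub>R g s) / h \<le> e/2"
      using h by (simp add: pos_divide_le_eq)
    then have "norm (integral {s..s+h} g - h *\<^sub>R g s) / h < e" using e by linarith
    moreover have "(1/h) *\<^sub>R integral {s..s+h} g - g s = (1/h) *\<^sub>R (integral {s..s+h} g - h *\<^sub>R g s)"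
      using h by (simp add: scaleR_diff_right)
    ultimately show "dist ((1/h) *\<^sub>R integral {s..s+h} g) (g s) < e"
      using e h by (simp add: dist_norm del: scaleR_diff_right)
  qed (fact d(1))
qed

lemma right_derivative_zero_imp_const:
  fixes g :: "real \<Rightarrow> 'a::real_normed_vector"
  assumes b: "b \<ge> 0" and cont: "continuous_on {0..b} g"
    and deriv: "\<And>t. 0 \<le> t \<Longrightarrow> t < b \<Longrightarrow> ((\<lambda>h. (1/h) *\<^sub>R (g (t+h) - g t)) \<longlongrightarrow> 0) (at_right 0)"
  shows "g b = g 0"
proof -
  have growth: "norm (g b - g 0) \<le> e * b" if e: "e > 0" for e
  proof -
    define S where "S = {t \<in> {0..b}. norm (g t - g 0) \<le> e * t}"
    have "closed S" unfolding S_def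
      by (intro continuous_on_closed_Collect_le continuous_intros cont)
    moreover have "0 \<in> S" "bdd_above S" using b by (auto simp: S_def intro: bdd_aboveI[of _ b])
    ultimately have mS: "Sup S \<in> S" using closed_contains_Sup by blast
    have "Sup S = b"
    proof (rule ccontr)
      define m where "m = Sup S"
      assume "Sup S \<noteq> b"
      then have m: "0 \<le> m" "m < b" using mS by (auto simp: S_def m_def)
      from tendstoD[OF deriv[OF m] e] obtain q where
        q: "q > 0" "\<And>h. 0 < h \<Longrightarrow> h < q \<Longrightarrow> norm ((1/h) *\<^sub>R (g (m+h) - g m)) < e"
        unfolding eventually_at_right_field by auto
      define h where "h = min (q/2) (b - m)"
      have h: "0 < h" "h < q" "m + h \<le> b" using q m by (auto simp: h_def)
      then have "norm (g (m+h) - g m) < e * h"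
        using q(2)[OF h(1,2)] by (simp only: norm_scaleR) (simp add: field_simps)
      moreover have "norm (g m - g 0) \<le> e * m" using mS by (simp add: S_def m_def)
      ultimately have "norm (g (m+h) - g 0) \<le> e * (m + h)"
        using norm_triangle_ineq[of "g (m+h) - g m" "g m - g 0"] by (simp add: algebra_simps)
      then have "m + h \<in> S" using h m by (simp add: S_def)
      then have "m + h \<le> m" unfolding m_def using \<open>bdd_above S\<close> by (rule cSup_upper)
      then show False using h by simp
    qed
    then show ?thesis using mS by (simp add: S_def)
  qed
  have "norm (g b - g 0) \<le> 0"
  proof (cases "b = 0")
    case False
    then have "norm (g b - g 0) \<le> e" if "e > 0" for e
      using growth[of "e / b"] that b by simp
    then show ?thesis by (meson dense not_le)
  qed simp
  then show ?thesis by simp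
qed

lemma integral_iterated_eq_weighted:
  fixes m :: "real \<Rightarrow> 'a::banach"
  assumes t: "t \<ge> 0" and m: "continuous_on {0..t} m"
  shows "integral {0..t} (\<lambda>s. integral {0..s} m) = integral {0..t} (\<lambda>r. (t - r) *\<^sub>R m r)"
proof -
  define D where "D \<tau> = \<tau> *\<^sub>R integral {0..\<tau>} m - integral {0..\<tau>} (\<lambda>r. r *\<^sub>R m r)
    - integral {0..\<tau>} (\<lambda>s. integral {0..s} m)" for \<tau>
  have cm: "continuous_on {0..t} (\<lambda>r. r *\<^sub>R m r)" by (intro continuous_intros m)
  have cI: "continuous_on {0..t} (\<lambda>s. integral {0..s} m)"
    by (rule indefinite_integral_continuous_1[OF integrable_continuous_real[OF m]])
  have "(D has_vector_derivative 0) (at \<tau> within {0..t})" if \<tau>: "\<tau> \<in> {0..t}" for \<tau>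
  proof -
    have "(D has_vector_derivative
        (\<tau> *\<^sub>R m \<tau> + 1 *\<^sub>R integral {0..\<tau>} m - \<tau> *\<^sub>R m \<tau> - integral {0..\<tau>} m)) (at \<tau> within {0..t})"
      unfolding D_def
      by (intro has_vector_derivative_diff has_vector_derivative_scaleR DERIV_ident
          integral_has_vector_derivative m cm cI \<tau>)
    then show ?thesis by simp
  qed
  then obtain c where "\<And>\<tau>. \<tau> \<in> {0..t} \<Longrightarrow> D \<tau> = c"
    using has_vector_derivative_zero_constant[of "{0..t}"] by blast
  then have "D t = D 0" using t by simp
  then have "integral {0..t} (\<lambda>s. integral {0..s} m) = t *\<^sub>R integral {0..t} m - integral {0..t} (\<lambda>r. r *\<^sub>R m r)"
    by (simp add: D_def)
  also have "\<dots> = integral {0..t} (\<lambda>r. t *\<^sub>R m r - r *\<^sub>R m r)"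
    by (subst integral_diff) (auto intro!: integrable_continuous_real continuous_intros m)
  finally show ?thesis by (simp add: scaleR_diff_left)
qed

lemma integral_split_cong:
  fixes h :: "real \<Rightarrow> 'a::banach"
  assumes h: "h integrable_on {a..b}" and c: "c \<in> {a..b}"
    and "\<And>x. x \<in> {a..c} \<Longrightarrow> h x = h1 x" "\<And>x. x \<in> {c..b} \<Longrightarrow> h x = h2 x"
  shows "integral {a..b} h = integral {a..c} h1 + integral {c..b} h2"
proof -
  have "integral {a..b} h = integral {a..c} h + integral {c..b} h"
    using h c by (simp add: Henstock_Kurzweil_Integration.integral_combine)
  also have "integral {a..c} h = integral {a..c} h1" by (rule integral_cong) (fact assms(3))
  also have "integral {c..b} h = integral {c..b} h2" by (rule integral_cong) (fact assms(4))
  finally show ?thesis .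
qed

lemma integral_triangle_swap:
  fixes k :: "real \<Rightarrow> real \<Rightarrow> 'a::banach"
  assumes t: "t \<ge> 0" and k: "continuous_on {(r, s). 0 \<le> s \<and> s \<le> r \<and> r \<le> t} (\<lambda>(r, s). k r s)"
  shows "integral {0..t} (\<lambda>r. integral {0..r} (k r)) = integral {0..t} (\<lambda>s. integral {s..t} (\<lambda>r. k r s))"
proof -
  have kc: "continuous_on X (\<lambda>x. k (p x) (q x))"
    if "continuous_on X p" "continuous_on X q" "\<And>x. x \<in> X \<Longrightarrow> 0 \<le> q x \<and> q x \<le> p x \<and> p x \<le> t"
    for X :: "'b::topological_space set" and p q
    using continuous_on_compose2[OF k continuous_on_Pair[OF that(1,2)]] that(3) by auto
  \<comment> \<open>\<open>kt\<close> extends \<open>k\<close> continuously to the square, constant in \<open>s\<close> above the diagonal\<close>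
  define kt where "kt r s = k r (min s r)" for r s
  have ckt: "continuous_on ({0..t} \<times> {0..t}) (\<lambda>(r, s). kt r s)"
    unfolding kt_def case_prod_unfold by (rule kc) (auto intro!: continuous_intros)
  have ckt': "continuous_on ({0..t} \<times> {0..t}) (\<lambda>(s, r). kt r s)"
  proof -
    have "prod.swap ` ({0..t} \<times> {0..t}) \<subseteq> {0..t} \<times> {0..t}" by auto
    from continuous_on_compose2[OF ckt continuous_on_swap this] show ?thesis
      by (simp add: case_prod_unfold)
  qed
  have cdiag: "continuous_on {0..t} (\<lambda>r. k r r)" by (rule kc) (auto intro!: continuous_intros)
  have int_row: "integral {0..t} (kt r) = integral {0..r} (k r) + (t - r) *\<^sub>R k r r"
    if r: "r \<in> {0..t}" for r
  proof -
    have "(kt r) integrable_on {0..t}"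
      unfolding kt_def by (intro integrable_continuous_real kc) (use r in \<open>auto intro!: continuous_intros\<close>)
    then have "integral {0..t} (kt r) = integral {0..r} (k r) + integral {r..t} (\<lambda>_. k r r)"
      by (rule integral_split_cong[OF _ r]) (auto simp: kt_def)
    then show ?thesis using r by simp
  qed
  have int_col: "integral {0..t} (\<lambda>r. kt r s) = integral {0..s} (\<lambda>r. k r r) + integral {s..t} (\<lambda>r. k r s)"
    if s: "s \<in> {0..t}" for s
  proof -
    have "(\<lambda>r. kt r s) integrable_on {0..t}"
      unfolding kt_def by (intro integrable_continuous_real kc) (use s in \<open>auto intro!: continuous_intros\<close>)
    then show ?thesis by (rule integral_split_cong[OF _ s]) (auto simp: kt_def)
  qed
  have int_rows: "(\<lambda>r. integral {0..t} (kt r)) integrable_on {0..t}"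
    using integral_integrable_2dim[of 0 0 t t "\<lambda>(r, s). kt r s"] ckt by (simp add: cbox_Pair_eq)
  have int_cols: "(\<lambda>s. integral {0..t} (\<lambda>r. kt r s)) integrable_on {0..t}"
    using integral_integrable_2dim[of 0 0 t t "\<lambda>(s, r). kt r s"] ckt' by (simp add: cbox_Pair_eq)
  have int_weight: "(\<lambda>r. (t - r) *\<^sub>R k r r) integrable_on {0..t}"
    by (intro integrable_continuous_real continuous_intros cdiag)
  have int_diag: "(\<lambda>s. integral {0..s} (\<lambda>r. k r r)) integrable_on {0..t}"
    by (intro integrable_continuous_real indefinite_integral_continuous_1 cdiag)
  have int_tri_rows: "(\<lambda>r. integral {0..r} (k r)) integrable_on {0..t}"
    by (rule integrable_eq[OF integrable_diff[OF int_rows int_weight]]) (simp add: int_row)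
  have int_tri_cols: "(\<lambda>s. integral {s..t} (\<lambda>r. k r s)) integrable_on {0..t}"
    by (rule integrable_eq[OF integrable_diff[OF int_cols int_diag]]) (simp add: int_col)
  have "integral {0..t} (\<lambda>r. integral {0..r} (k r)) + integral {0..t} (\<lambda>r. (t - r) *\<^sub>R k r r)
      = integral {0..t} (\<lambda>r. integral {0..r} (k r) + (t - r) *\<^sub>R k r r)"
    by (rule integral_add[OF int_tri_rows int_weight, symmetric])
  also have "\<dots> = integral {0..t} (\<lambda>r. integral {0..t} (kt r))"
    by (rule integral_cong) (simp add: int_row)
  also have "\<dots> = integral {0..t} (\<lambda>s. integral {0..t} (\<lambda>r. kt r s))"
    using integral_swap_continuous[of 0 0 t t kt] ckt by (simp add: cbox_Pair_eq)
  also have "\<dots> = integral {0..t} (\<lambda>s. integral {0..s} (\<lambda>r. k r r) + integral {s..t} (\<lambda>r. k r s))"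
    by (rule integral_cong) (simp add: int_col)
  also have "\<dots> = integral {0..t} (\<lambda>s. integral {0..s} (\<lambda>r. k r r)) + integral {0..t} (\<lambda>s. integral {s..t} (\<lambda>r. k r s))"
    by (rule integral_add[OF int_diag int_tri_cols])
  finally show ?thesis by (simp add: integral_iterated_eq_weighted[OF t cdiag])
qed

lemma integral_of_convolution:
  fixes f :: "real \<Rightarrow> 'b::banach" and g :: "real \<Rightarrow> 'c::banach" and prod :: "'b \<Rightarrow> 'c \<Rightarrow> 'd::banach"
  assumes prod: "bounded_bilinear prod" and f: "continuous_on {0..} f" and g: "continuous_on {0..} g"
    and t: "t \<ge> 0"
  shows "integral {0..t} (\<lambda>r. integral {0..r} (\<lambda>s. prod (f (r - s)) (g s)))
       = integral {0..t} (\<lambda>s. prod (integral {0..t-s} f) (g s))"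
proof -
  have "integral {0..t} (\<lambda>r. integral {0..r} (\<lambda>s. prod (f (r - s)) (g s)))
      = integral {0..t} (\<lambda>s. integral {s..t} (\<lambda>r. prod (f (r - s)) (g s)))"
    by (rule integral_triangle_swap[OF t])
       (auto simp: case_prod_unfold intro!: bounded_bilinear.continuous_on[OF prod] continuous_on_compose2[OF f]
         continuous_on_compose2[OF g] continuous_intros)
  also have "\<dots> = integral {0..t} (\<lambda>s. prod (integral {0..t-s} f) (g s))"
  proof (rule integral_cong)
    fix s assume s: "s \<in> {0..t}"
    have "(\<lambda>r. f (r - s)) integrable_on {s..t}"
      by (rule integrable_continuous_real, rule continuous_on_compose2[OF f]) (auto intro!: continuous_intros)
    moreover have "integral {s..t} (\<lambda>r. f (r - s)) = integral {0..t-s} f"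
      using integral_shift_real_ivl[where f=f and a=0 and b="t - s" and c="-s"] by simp
    ultimately show "integral {s..t} (\<lambda>r. prod (f (r - s)) (g s)) = prod (integral {0..t-s} f) (g s)"
      by (simp add: integral_bounded_linear[OF bounded_bilinear.bounded_linear_left[OF prod]])
  qed
  finally show ?thesis .
qed

lemma convolution_with_integral:
  fixes f :: "real \<Rightarrow> 'b::banach" and g :: "real \<Rightarrow> 'c::banach" and prod :: "'b \<Rightarrow> 'c \<Rightarrow> 'd::banach"
  assumes prod: "bounded_bilinear prod" and f: "continuous_on {0..} f" and g: "continuous_on {0..} g"
    and t: "t \<ge> 0"
  shows "integral {0..t} (\<lambda>s. prod (f (t - s)) (integral {0..s} g))
       = integral {0..t} (\<lambda>s. prod (integral {0..t-s} f) (g s))"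
proof -
  have "integral {0..t} (\<lambda>s. prod (f (t - s)) (integral {0..s} g))
      = integral {0..t} (\<lambda>s. integral {0..s} (\<lambda>\<sigma>. prod (f (t - s)) (g \<sigma>)))"
  proof (rule integral_cong)
    fix s assume "s \<in> {0..t}"
    have "g integrable_on {0..s}"
      by (rule integrable_continuous_real, rule continuous_on_subset[OF g]) auto
    then show "prod (f (t - s)) (integral {0..s} g) = integral {0..s} (\<lambda>\<sigma>. prod (f (t - s)) (g \<sigma>))"
      by (simp add: integral_bounded_linear[OF bounded_bilinear.bounded_linear_right[OF prod]])
  qed
  also have "\<dots> = integral {0..t} (\<lambda>\<sigma>. integral {\<sigma>..t} (\<lambda>s. prod (f (t - s)) (g \<sigma>)))"
    by (rule integral_triangle_swap[OF t])
       (auto simp: case_prod_unfold intro!: bounded_bilinear.continuous_on[OF prod] continuous_on_compose2[OF f]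
         continuous_on_compose2[OF g] continuous_intros)
  also have "\<dots> = integral {0..t} (\<lambda>\<sigma>. prod (integral {0..t-\<sigma>} f) (g \<sigma>))"
  proof (rule integral_cong)
    fix \<sigma> assume \<sigma>: "\<sigma> \<in> {0..t}"
    have "integral {\<sigma>..t} (\<lambda>s. f (t - s)) = integral {-t..-\<sigma>} (\<lambda>s. f (t + s))"
      using Henstock_Kurzweil_Integration.integral_reflect_real[where a="-t" and b="-\<sigma>" and f="\<lambda>s. f (t + s)"]
      by simp
    also have "\<dots> = integral {0..t-\<sigma>} f"
      using integral_shift_real_ivl[where f=f and a=0 and b="t - \<sigma>" and c=t] by (simp add: add.commute)
    finally have "integral {\<sigma>..t} (\<lambda>s. f (t - s)) = integral {0..t-\<sigma>} f" .
    moreover have "(\<lambda>s. f (t - s)) integrable_on {\<sigma>..t}"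
      by (rule integrable_continuous_real, rule continuous_on_compose2[OF f]) (auto intro!: continuous_intros)
    ultimately show "integral {\<sigma>..t} (\<lambda>s. prod (f (t - s)) (g \<sigma>)) = prod (integral {0..t-\<sigma>} f) (g \<sigma>)"
      by (simp add: integral_bounded_linear[OF bounded_bilinear.bounded_linear_left[OF prod]])
  qed
  finally show ?thesis .
qed

lemma integral_convolution:
  fixes f :: "real \<Rightarrow> 'b::banach" and g :: "real \<Rightarrow> 'c::banach" and prod :: "'b \<Rightarrow> 'c \<Rightarrow> 'd::banach"
  assumes "bounded_bilinear prod" "continuous_on {0..} f" "continuous_on {0..} g" "t \<ge> 0"
  shows "integral {0..t} (\<lambda>r. integral {0..r} (\<lambda>s. prod (f (r - s)) (g s)))
       = integral {0..t} (\<lambda>s. prod (f (t - s)) (integral {0..s} g))"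
  by (simp only: integral_of_convolution[OF assms] convolution_with_integral[OF assms])

lemma continuous_on_convolution:
  fixes f :: "real \<Rightarrow> 'b::banach" and g :: "real \<Rightarrow> 'c::banach" and prod :: "'b \<Rightarrow> 'c \<Rightarrow> 'd::banach"
  assumes prod: "bounded_bilinear prod" and f: "continuous_on {0..} f" and g: "continuous_on {0..} g"
  shows "continuous_on {0..} (\<lambda>t. integral {0..t} (\<lambda>s. prod (f (t - s)) (g s)))"
proof -
  \<comment> \<open>substitute \<open>s = t\<theta>\<close> to move the dependence on \<open>t\<close> into the integrand\<close>
  define H where "H t = integral (cbox 0 1) (\<lambda>\<theta>. prod (f (t - t * \<theta>)) (g (t * \<theta>)))" for t :: real
  have "continuous_on ({0..} \<times> cbox 0 1) (\<lambda>(t, \<theta>). prod (f (t - t * \<theta>)) (g (t * \<theta>)))"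
    unfolding case_prod_unfold
    by (intro bounded_bilinear.continuous_on[OF prod] continuous_on_compose2[OF f]
        continuous_on_compose2[OF g] continuous_intros) (auto simp: mult_left_le)
  then have "continuous_on {0..} (\<lambda>t. t *\<^sub>R H t)"
    unfolding H_def by (intro continuous_intros integral_continuous_on_param)
  moreover have "t *\<^sub>R H t = integral {0..t} (\<lambda>s. prod (f (t - s)) (g s))" if t: "t \<ge> 0" for t
  proof (cases "t = 0")
    case False
    then have "(\<lambda>x. x / t) ` {0..t} = cbox 0 1" using t by simp
    then show ?thesis
      using integral_stretch_real[of t 0 t "\<lambda>s. prod (f (t - s)) (g s)"] False t by (simp add: H_def)
  qed simp
  ultimately show ?thesis by (rule continuous_on_eq) simp
qed

lemma eq_mult_integral_imp_zero:
  fixes g :: "real \<Rightarrow> complex"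
  assumes g: "continuous_on {0..} g" and eq: "\<And>t. t \<ge> 0 \<Longrightarrow> g t = b * integral {0..t} g"
    and T: "T \<ge> 0"
  shows "g T = 0"
proof -
  define G where "G \<tau> = integral {0..\<tau>} g" for \<tau>
  define E where "E \<tau> = exp (- b * of_real \<tau>)" for \<tau> :: real
  \<comment> \<open>\<open>(E G)' = E (g - b G) = 0\<close>\<close>
  have "((\<lambda>\<tau>. E \<tau> * G \<tau>) has_vector_derivative 0) (at \<tau> within {0..T})" if \<tau>: "\<tau> \<in> {0..T}" for \<tau>
  proof -
    have "continuous_on {0..T} g" by (rule continuous_on_subset[OF g]) auto
    then have dG: "(G has_vector_derivative g \<tau>) (at \<tau> within {0..T})"
      unfolding G_def using \<tau> by (rule integral_has_vector_derivative)
    have "((\<lambda>w. exp (- b * w)) has_field_derivative (exp (- b * of_real \<tau>) * (- b))) (at (of_real \<tau>))"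
      by (auto intro!: derivative_eq_intros)
    then have dE: "(E has_vector_derivative (E \<tau> * (- b))) (at \<tau> within {0..T})"
      unfolding E_def by (rule has_vector_derivative_real_field)
    have deriv0: "E \<tau> * g \<tau> + E \<tau> * (- b) * G \<tau> = 0"
      using eq[of \<tau>] \<tau> by (simp add: G_def algebra_simps)
    show ?thesis using has_vector_derivative_mult[OF dE dG] by (simp only: deriv0)
  qed
  then obtain c where "\<And>\<tau>. \<tau> \<in> {0..T} \<Longrightarrow> E \<tau> * G \<tau> = c"
    using has_vector_derivative_zero_constant[of "{0..T}"] by blast
  then have "E T * G T = E 0 * G 0" using T by simp
  then have "G T = 0" by (simp add: E_def G_def)
  then show ?thesis using eq[OF T] by (simp add: G_def)
qed

section \<open>Operators given by graphs, and the projections\<close>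

lemma adjoint_graphD: "(z, a) \<in> adjoint_graph G \<Longrightarrow> (x, v) \<in> G \<Longrightarrow> cinner v z = cinner x a"
  unfolding adjoint_graph_def by blast

lemma op_of_eqI: "(x, y) \<in> G \<Longrightarrow> (\<And>y'. (x, y') \<in> G \<Longrightarrow> y' = y) \<Longrightarrow> op_of G x = y"
  unfolding op_of_def by (rule the_equality)

lemma bounded_linear_projP: "bounded_linear (projP (z::'a::chilbert))"
proof -
  have "bounded_linear (\<lambda>v::'a. cinner v z / cinner z z)"
    using bounded_linear_compose[OF bounded_linear_divide[of "cinner z z"] bounded_linear_cinner_left[of z]]
    by (simp add: o_def)
  from bounded_linear_compose[OF bounded_bilinear.bounded_linear_left[OF bounded_bilinear_scaleC, where b=z] this]
  show ?thesis unfolding projP_def[abs_def] by (simp add: o_def)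
qed

lemma bounded_linear_projQ: "bounded_linear (projQ (z::'a::chilbert))"
  unfolding projQ_def[abs_def] by (intro bounded_linear_sub bounded_linear_ident bounded_linear_projP)

lemma projP_plus_projQ: "projP z v + projQ z v = v"
  by (simp add: projQ_def)

lemma projQ_scaleC: "projQ z (c *\<^sub>C v) = c *\<^sub>C projQ z v"
  by (simp add: projQ_def projP_def cinner_scaleC_left scaleC_diff_right scaleC_scaleC)

lemma projQ_eq_self: "cinner v z = 0 \<Longrightarrow> projQ z v = v"
  by (simp add: projQ_def projP_def)

lemma cinner_projQ_self: "z \<noteq> 0 \<Longrightarrow> cinner (projQ z v) z = 0"
  using cinner_eq_zero_iff[of z] by (simp add: projQ_def projP_def cinner_diff_left cinner_scaleC_left)

lemma projQ_self: "z \<noteq> 0 \<Longrightarrow> projQ z z = 0"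
  using cinner_eq_zero_iff[of z] by (simp add: projQ_def projP_def scaleC_one)

lemma projQ_projQ: "z \<noteq> 0 \<Longrightarrow> projQ z (projQ z v) = projQ z v"
  by (simp add: projQ_eq_self cinner_projQ_self)

lemma projQ_projP: "z \<noteq> 0 \<Longrightarrow> projQ z (projP z v) = 0"
  using cinner_eq_zero_iff[of z]
  by (simp add: projQ_def projP_def cinner_scaleC_left scaleC_scaleC scaleC_diff_right)

lemma cinner_projP_plus_projQ:
  "cinner y a = cnj (cinner a z / cinner z z) * cinner y z + cinner y (projQ z a)"
  using arg_cong[OF projP_plus_projQ[of z a], of "cinner y"]
  by (simp add: cinner_add_right projP_def cinner_scaleC_right)

section \<open>Strongly continuous semigroups\<close>

locale c0_semigroup =
  fixes U :: "real \<Rightarrow> 'a::chilbert \<Rightarrow> 'a"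
  assumes C0: "C0_semigroup U"
begin

lemma bounded_linear: "t \<ge> 0 \<Longrightarrow> bounded_linear (U t)"
  using C0 by (auto simp: C0_semigroup_def clinear_bounded_def)

lemma scaleC: "t \<ge> 0 \<Longrightarrow> U t (c *\<^sub>C x) = c *\<^sub>C U t x"
  using C0 by (auto simp: C0_semigroup_def clinear_bounded_def)

lemma zero_apply [simp]: "U 0 x = x"
  using C0 by (auto simp: C0_semigroup_def)

lemma add_apply: "s \<ge> 0 \<Longrightarrow> t \<ge> 0 \<Longrightarrow> U (s + t) x = U s (U t x)"
  using C0 by (auto simp: C0_semigroup_def)

lemma continuous_orbit: "continuous_on {0..} (\<lambda>t. U t x)"
  using C0 by (auto simp: C0_semigroup_def)

lemma integrable_orbit: "0 \<le> a \<Longrightarrow> (\<lambda>t. U t x) integrable_on {a..b}"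
  by (rule integrable_continuous_real, rule continuous_on_subset[OF continuous_orbit]) auto

lemma diff: "t \<ge> 0 \<Longrightarrow> U t (x - y) = U t x - U t y"
  by (simp add: linear_diff bounded_linear.linear[OF bounded_linear])

lemma add: "t \<ge> 0 \<Longrightarrow> U t (x + y) = U t x + U t y"
  by (simp add: linear_add bounded_linear.linear[OF bounded_linear])

lemma scaleR: "t \<ge> 0 \<Longrightarrow> U t (r *\<^sub>R x) = r *\<^sub>R U t x"
  by (simp add: linear_scale bounded_linear.linear[OF bounded_linear])

lemma norm_bound: "\<exists>M. \<forall>s\<in>{0..T}. \<forall>x. norm (U s x) \<le> M * norm x"
proof (rule uniform_boundedness)
  show "bounded ((\<lambda>s. U s x) ` {0..T})" for x
    by (rule compact_imp_bounded, rule compact_continuous_image)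
       (auto intro: continuous_on_subset[OF continuous_orbit])
qed (auto intro: bounded_linear)

lemma continuous_on_apply: "continuous_on ({0..} \<times> UNIV) (\<lambda>p. U (fst p) (snd p))"
proof (clarsimp simp: continuous_on_def)
  fix t :: real and x :: 'a assume t: "t \<ge> 0"
  let ?F = "at (t, x) within {0..} \<times> UNIV"
  obtain M where M: "\<And>s y. s \<in> {0..t+1} \<Longrightarrow> norm (U s y) \<le> M * norm y"
    using norm_bound[of "t + 1"] by blast
  have "continuous_on ({0..} \<times> UNIV) (\<lambda>p::real \<times> 'a. U (fst p) x)"
    by (rule continuous_on_compose2[OF continuous_orbit continuous_on_fst]) auto
  then have "((\<lambda>p. U (fst p) x) \<longlongrightarrow> U t x) ?F"
    using t by (auto simp: continuous_on_def)
  moreover have "(snd \<longlongrightarrow> x) ?F"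
    using tendsto_snd[OF tendsto_ident_at[of "(t, x)"]] by simp
  ultimately have "((\<lambda>p. M * norm (snd p - x) + norm (U (fst p) x - U t x)) \<longlongrightarrow> M * norm (x - x) + 0) ?F"
    by (intro tendsto_intros LIM_zero[THEN tendsto_norm_zero])
  then have bound_lim: "((\<lambda>p. M * norm (snd p - x) + norm (U (fst p) x - U t x)) \<longlongrightarrow> 0) ?F"
    by simp
  have bound: "\<forall>\<^sub>F p in ?F. norm (U (fst p) (snd p) - U t x) \<le> M * norm (snd p - x) + norm (U (fst p) x - U t x)"
  proof -
    have "\<forall>\<^sub>F p in ?F. fst p < t + 1"
      by (rule order_tendstoD[OF tendsto_fst[OF tendsto_ident_at]]) simp
    moreover have "\<forall>\<^sub>F p in ?F. fst p \<ge> 0"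
      unfolding eventually_at_filter by (intro always_eventually) (simp add: mem_Times_iff)
    ultimately show ?thesis
    proof eventually_elim
      case (elim p)
      then have split: "U (fst p) (snd p) - U t x = U (fst p) (snd p - x) + (U (fst p) x - U t x)"
        by (simp add: diff)
      have "norm (U (fst p) (snd p) - U t x) \<le> norm (U (fst p) (snd p - x)) + norm (U (fst p) x - U t x)"
        unfolding split by (rule norm_triangle_ineq)
      moreover have "norm (U (fst p) (snd p - x)) \<le> M * norm (snd p - x)"
        using M[of "fst p" "snd p - x"] elim by simp
      ultimately show ?case by linarith
    qed
  qed
  from Lim_null_comparison[OF bound bound_lim]
  show "((\<lambda>p. U (fst p) (snd p)) \<longlongrightarrow> U t x) ?F"
    by (simp only: LIM_zero_iff)
qed

lemma continuous_on_apply_compose: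
  assumes "continuous_on X \<tau>" "continuous_on X v" "\<And>p. p \<in> X \<Longrightarrow> \<tau> p \<ge> 0"
  shows "continuous_on X (\<lambda>p. U (\<tau> p) (v p))"
  using continuous_on_compose2[OF continuous_on_apply continuous_on_Pair[OF assms(1,2)]] assms(3)
  by auto

lemma generator_graphI:
  assumes "\<And>h. h > 0 \<Longrightarrow> U h y - y = integral {0..h} (\<lambda>s. U s v)"
  shows "(y, v) \<in> generator_graph U"
proof -
  have lim: "((\<lambda>h. (1/h) *\<^sub>R integral {0..0+h} (\<lambda>s. U s v)) \<longlongrightarrow> U 0 v) (at_right 0)"
    by (rule integral_average_tendsto[OF continuous_orbit]) simp
  have "\<forall>\<^sub>F h in at_right 0. (1/h) *\<^sub>R integral {0..0+h} (\<lambda>s. U s v) = (1/h) *\<^sub>R (U h y - y)"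
    using assms by (auto simp: eventually_at_right_field intro!: exI[of _ 1])
  from Lim_transform_eventually[OF lim this] show ?thesis
    by (simp add: generator_graph_def)
qed

lemma generator_graphD:
  assumes G: "(y, v) \<in> generator_graph U" and b: "b \<ge> 0"
  shows "U b y - y = integral {0..b} (\<lambda>s. U s v)"
proof -
  define g where "g t = U t y - integral {0..t} (\<lambda>s. U s v)" for t
  have "g b = g 0"
  proof (rule right_derivative_zero_imp_const[OF b])
    show "continuous_on {0..b} g" unfolding g_def
      by (intro continuous_intros continuous_on_subset[OF continuous_orbit]
          indefinite_integral_continuous_1 integrable_orbit) auto
    fix t :: real assume t: "0 \<le> t" "t < b"
    have "((\<lambda>h. (1/h) *\<^sub>R (U h y - y)) \<longlongrightarrow> v) (at_right 0)"
      using G by (simp add: generator_graph_def)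
    then have lim: "((\<lambda>h. U t ((1/h) *\<^sub>R (U h y - y)) - (1/h) *\<^sub>R integral {t..t+h} (\<lambda>s. U s v))
        \<longlongrightarrow> U t v - U t v) (at_right 0)"
      using t by (intro tendsto_diff bounded_linear.tendsto[OF bounded_linear]
          integral_average_tendsto[OF continuous_orbit]) auto
    have "\<forall>\<^sub>F h in at_right 0. U t ((1/h) *\<^sub>R (U h y - y)) - (1/h) *\<^sub>R integral {t..t+h} (\<lambda>s. U s v)
        = (1/h) *\<^sub>R (g (t+h) - g t)"
      unfolding eventually_at_right_field
    proof (intro exI[of _ 1] conjI allI impI)
      fix h :: real assume h: "0 < h" "h < 1"
      have "integral {0..t} (\<lambda>s. U s v) + integral {t..t+h} (\<lambda>s. U s v) = integral {0..t+h} (\<lambda>s. U s v)"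
        using h t by (intro Henstock_Kurzweil_Integration.integral_combine integrable_orbit) auto
      moreover have "U (t+h) y = U t (U h y)" using add_apply[of t h y] h t by simp
      ultimately show "U t ((1/h) *\<^sub>R (U h y - y)) - (1/h) *\<^sub>R integral {t..t+h} (\<lambda>s. U s v)
          = (1/h) *\<^sub>R (g (t+h) - g t)"
        unfolding g_def using t by (simp add: scaleR diff algebra_simps flip: scaleR_diff_right)
    qed simp
    from Lim_transform_eventually[OF lim this]
    show "((\<lambda>h. (1/h) *\<^sub>R (g (t+h) - g t)) \<longlongrightarrow> 0) (at_right 0)"
      by simp
  qed
  then show ?thesis by (simp add: g_def algebra_simps)
qed

lemma integral_orbit_in_generator_graph:
  assumes t: "t \<ge> 0"
  shows "(integral {0..t} (\<lambda>s. U s y), U t y - y) \<in> generator_graph U"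
proof (rule generator_graphI)
  fix h :: real assume h: "h > 0"
  have "U h (integral {0..t} (\<lambda>s. U s y)) = integral {0..t} (\<lambda>s. U h (U s y))"
    using h by (simp add: integral_bounded_linear[OF bounded_linear integrable_orbit])
  also have "\<dots> = integral {0..t} (\<lambda>s. U (s + h) y)"
    using h by (intro integral_cong) (simp add: add_apply[symmetric] add.commute)
  also have "\<dots> = integral {h..t+h} (\<lambda>s. U s y)"
    using integral_shift_real_ivl[where f="\<lambda>s. U s y" and a=h and b="t+h" and c=h] by simp
  finally have shifted: "U h (integral {0..t} (\<lambda>s. U s y)) = integral {h..t+h} (\<lambda>s. U s y)" .
  have "integral {t..t+h} (\<lambda>s. U s y) = integral {0..h} (\<lambda>s. U (s + t) y)"
    using integral_shift_real_ivl[where f="\<lambda>s. U s y" and a=t and b="t+h" and c=t] by simp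
  also have "\<dots> = integral {0..h} (\<lambda>s. U s (U t y))"
    using t by (intro integral_cong) (simp add: add_apply)
  finally have tail: "integral {t..t+h} (\<lambda>s. U s y) = integral {0..h} (\<lambda>s. U s (U t y))" .
  have "integral {0..h} (\<lambda>s. U s y) + integral {h..t+h} (\<lambda>s. U s y) = integral {0..t+h} (\<lambda>s. U s y)"
    "integral {0..t} (\<lambda>s. U s y) + integral {t..t+h} (\<lambda>s. U s y) = integral {0..t+h} (\<lambda>s. U s y)"
    using h t by (intro Henstock_Kurzweil_Integration.integral_combine integrable_orbit; simp)+
  then have "U h (integral {0..t} (\<lambda>s. U s y)) - integral {0..t} (\<lambda>s. U s y)
      = integral {0..h} (\<lambda>s. U s (U t y)) - integral {0..h} (\<lambda>s. U s y)"
    using shifted tail by (simp add: algebra_simps)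
  also have "\<dots> = integral {0..h} (\<lambda>s. U s (U t y) - U s y)"
    by (intro integral_diff[symmetric] integrable_orbit) simp_all
  also have "\<dots> = integral {0..h} (\<lambda>s. U s (U t y - y))"
    by (intro integral_cong) (simp add: diff)
  finally show "U h (integral {0..t} (\<lambda>s. U s y)) - integral {0..t} (\<lambda>s. U s y)
      = integral {0..h} (\<lambda>s. U s (U t y - y))" .
qed

lemma generator_graph_unique:
  assumes "(x, y1) \<in> generator_graph U" "(x, y2) \<in> generator_graph U"
  shows "y1 = y2"
  using tendsto_unique[OF trivial_limit_at_right_real] assms by (auto simp: generator_graph_def)

lemma generator_graph_diff:
  assumes "(x1, y1) \<in> generator_graph U" "(x2, y2) \<in> generator_graph U"
  shows "(x1 - x2, y1 - y2) \<in> generator_graph U"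
proof -
  have lim: "((\<lambda>h. (1/h) *\<^sub>R (U h x1 - x1) - (1/h) *\<^sub>R (U h x2 - x2)) \<longlongrightarrow> y1 - y2) (at_right 0)"
    using assms by (intro tendsto_diff) (simp_all add: generator_graph_def)
  have "\<forall>\<^sub>F h in at_right 0.
      (1/h) *\<^sub>R (U h x1 - x1) - (1/h) *\<^sub>R (U h x2 - x2) = (1/h) *\<^sub>R (U h (x1 - x2) - (x1 - x2))"
    unfolding eventually_at_right_field
    by (intro exI[of _ 1] conjI allI impI) (simp_all add: diff algebra_simps)
  from Lim_transform_eventually[OF lim this] show ?thesis
    by (simp add: generator_graph_def)
qed

lemma generator_graph_scaleC:
  assumes "(x, y) \<in> generator_graph U"
  shows "(c *\<^sub>C x, c *\<^sub>C y) \<in> generator_graph U"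
proof -
  have "((\<lambda>h. (1/h) *\<^sub>R (U h x - x)) \<longlongrightarrow> y) (at_right 0)"
    using assms by (simp add: generator_graph_def)
  then have lim: "((\<lambda>h. c *\<^sub>C ((1/h) *\<^sub>R (U h x - x))) \<longlongrightarrow> c *\<^sub>C y) (at_right 0)"
    by (rule bounded_linear.tendsto[OF bounded_bilinear.bounded_linear_right[OF bounded_bilinear_scaleC]])
  have "\<forall>\<^sub>F h in at_right 0. c *\<^sub>C ((1/h) *\<^sub>R (U h x - x)) = (1/h) *\<^sub>R (U h (c *\<^sub>C x) - c *\<^sub>C x)"
    unfolding eventually_at_right_field
    by (intro exI[of _ 1] conjI allI impI) (simp_all add: scaleC scaleC_diff_right scaleC_scaleR_commute)
  from Lim_transform_eventually[OF lim this] show ?thesis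
    by (simp add: generator_graph_def)
qed

lemma bounded_linear_integral_orbit:
  assumes h: "h \<ge> 0"
  shows "bounded_linear (\<lambda>v. integral {0..h} (\<lambda>s. U s v))"
proof -
  obtain M where M: "\<And>s v. s \<in> {0..h} \<Longrightarrow> norm (U s v) \<le> M * norm v"
    using norm_bound[of h] by blast
  show ?thesis
  proof (rule bounded_linear_intro[where K="M * h"])
    show "integral {0..h} (\<lambda>s. U s (v + w)) = integral {0..h} (\<lambda>s. U s v) + integral {0..h} (\<lambda>s. U s w)"
      for v w
    proof -
      have "integral {0..h} (\<lambda>s. U s (v + w)) = integral {0..h} (\<lambda>s. U s v + U s w)"
        by (intro integral_cong) (simp add: add)
      then show ?thesis by (simp add: integral_add integrable_orbit)
    qed
    show "integral {0..h} (\<lambda>s. U s (r *\<^sub>R v)) = r *\<^sub>R integral {0..h} (\<lambda>s. U s v)" for r v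
    proof -
      have "integral {0..h} (\<lambda>s. U s (r *\<^sub>R v)) = integral {0..h} (\<lambda>s. r *\<^sub>R U s v)"
        by (intro integral_cong) (simp add: scaleR)
      then show ?thesis by simp
    qed
    show "norm (integral {0..h} (\<lambda>s. U s v)) \<le> norm v * (M * h)" for v
      using integral_bound[of 0 h "\<lambda>s. U s v" "M * norm v"] h M
      by (simp add: continuous_on_subset[OF continuous_orbit] algebra_simps)
  qed
qed

lemma closed_generator_graph: "closed (generator_graph U)"
  unfolding closed_sequential_limits
proof (intro allI impI, elim conjE)
  fix p :: "nat \<Rightarrow> 'a \<times> 'a" and l
  assume p: "\<forall>n. p n \<in> generator_graph U" "p \<longlonglongrightarrow> l"
  have "(fst l, snd l) \<in> generator_graph U"
  proof (rule generator_graphI)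
    fix h :: real assume h: "h > 0"
    have "(\<lambda>n. U h (fst (p n)) - fst (p n)) \<longlonglongrightarrow> U h (fst l) - fst l"
      using h by (intro tendsto_intros bounded_linear.tendsto[OF bounded_linear] p(2)) simp
    moreover have "(\<lambda>n. integral {0..h} (\<lambda>s. U s (snd (p n)))) \<longlonglongrightarrow> integral {0..h} (\<lambda>s. U s (snd l))"
      using h by (intro bounded_linear.tendsto[OF bounded_linear_integral_orbit] tendsto_snd p(2)) simp
    moreover have "U h (fst (p n)) - fst (p n) = integral {0..h} (\<lambda>s. U s (snd (p n)))" for n
      using generator_graphD[of "fst (p n)" "snd (p n)" h] p(1) h by simp
    ultimately show "U h (fst l) - fst l = integral {0..h} (\<lambda>s. U s (snd l))"
      using LIMSEQ_unique by auto
  qed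
  then show "l \<in> generator_graph U" by simp
qed

lemma generator_graph_integral:
  fixes a b :: real
  assumes y: "continuous_on {a..b} y" and v: "continuous_on {a..b} v"
    and G: "\<And>s. s \<in> {a..b} \<Longrightarrow> (y s, v s) \<in> generator_graph U"
  shows "(integral {a..b} y, integral {a..b} v) \<in> generator_graph U"
proof (rule generator_graphI)
  fix h :: real assume h: "h > 0"
  have "(\<lambda>s. U h (y s)) integrable_on {a..b}"
    using h by (intro integrable_continuous_real continuous_on_apply_compose y continuous_on_const) auto
  then have "U h (integral {a..b} y) - integral {a..b} y = integral {a..b} (\<lambda>s. U h (y s) - y s)"
    using h by (simp add: integral_bounded_linear[OF bounded_linear, symmetric] integral_diff
        integrable_continuous_real[OF y])
  also have "\<dots> = integral {a..b} (\<lambda>s. integral {0..h} (\<lambda>\<sigma>. U \<sigma> (v s)))"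
    using h by (intro integral_cong generator_graphD G) auto
  also have "\<dots> = integral {0..h} (\<lambda>\<sigma>. integral {a..b} (\<lambda>s. U \<sigma> (v s)))"
  proof -
    have "continuous_on (cbox (a, 0) (b, h)) (\<lambda>(s, \<sigma>). U \<sigma> (v s))"
      unfolding case_prod_unfold cbox_Pair_eq
      by (intro continuous_on_apply_compose continuous_intros continuous_on_compose2[OF v]) auto
    from integral_swap_continuous[OF this] show ?thesis by simp
  qed
  also have "\<dots> = integral {0..h} (\<lambda>\<sigma>. U \<sigma> (integral {a..b} v))"
    by (intro integral_cong integral_bounded_linear[OF bounded_linear] integrable_continuous_real v) auto
  finally show "U h (integral {a..b} y) - integral {a..b} y = integral {0..h} (\<lambda>\<sigma>. U \<sigma> (integral {a..b} v))" .
qed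

lemma adjoint_generator_graph_unique:
  assumes a1: "(z, a1) \<in> adjoint_graph (generator_graph U)"
    and a2: "(z, a2) \<in> adjoint_graph (generator_graph U)"
  shows "a1 = a2"
proof -
  have "cinner y (a1 - a2) = 0" for y
  proof -
    \<comment> \<open>density of the domain: the averages \<open>avg h\<close> lie in it and tend to \<open>y\<close>\<close>
    define avg where "avg h = (1/h) *\<^sub>R integral {0..h} (\<lambda>s. U s y)" for h
    have "((\<lambda>h. cinner (avg h) (a1 - a2)) \<longlongrightarrow> cinner y (a1 - a2)) (at_right 0)"
      unfolding avg_def using integral_average_tendsto[OF continuous_orbit, of 0 y]
      by (intro bounded_linear.tendsto[OF bounded_linear_cinner_left]) simp
    moreover have "((\<lambda>h. cinner (avg h) (a1 - a2)) \<longlongrightarrow> 0) (at_right 0)"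
    proof (rule tendsto_eventually, unfold eventually_at_right_field, intro exI[of _ 1] conjI allI impI)
      fix h :: real assume "0 < h" "h < 1"
      then have "(avg h, complex_of_real (1/h) *\<^sub>C (U h y - y)) \<in> generator_graph U"
        unfolding avg_def scaleR_scaleC
        by (intro generator_graph_scaleC integral_orbit_in_generator_graph) simp
      then show "cinner (avg h) (a1 - a2) = 0"
        using adjoint_graphD[OF a1] adjoint_graphD[OF a2] by (simp add: cinner_diff_right)
    qed simp
    ultimately show ?thesis
      by (rule tendsto_unique[OF trivial_limit_at_right_real])
  qed
  then show ?thesis using cinner_eq_zero_iff[of "a1 - a2"] by simp
qed

lemma QL_graph_eq:
  assumes z: "z \<noteq> 0" and a: "(z, a) \<in> adjoint_graph (generator_graph U)"
  shows "QL_graph U z = {p. (fst p, snd p + (cinner (fst p) a / cinner z z) *\<^sub>C z) \<in> generator_graph U}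
    \<inter> {p. projQ z (snd p) = snd p}"
proof -
  \<comment> \<open>the \<open>P\<close>-component of a generator value is determined by the adjoint\<close>
  have P: "projP z w = (cinner y a / cinner z z) *\<^sub>C z" if "(y, w) \<in> generator_graph U" for y w
    using adjoint_graphD[OF a that] by (simp add: projP_def)
  show ?thesis
  proof (intro set_eqI iffI)
    fix p assume "p \<in> QL_graph U z"
    then obtain y w where "p = (y, projQ z w)" "(y, w) \<in> generator_graph U"
      unfolding QL_graph_def by blast
    then show "p \<in> {p. (fst p, snd p + (cinner (fst p) a / cinner z z) *\<^sub>C z) \<in> generator_graph U}
        \<inter> {p. projQ z (snd p) = snd p}"
      using P projP_plus_projQ[of z w] projQ_projQ[OF z] by (simp add: add.commute)
  next
    fix p assume p: "p \<in> {p. (fst p, snd p + (cinner (fst p) a / cinner z z) *\<^sub>C z) \<in> generator_graph U}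
        \<inter> {p. projQ z (snd p) = snd p}"
    have "projQ z (snd p + (cinner (fst p) a / cinner z z) *\<^sub>C z) = snd p"
      using p by (simp add: linear_add bounded_linear.linear[OF bounded_linear_projQ] projQ_scaleC projQ_self[OF z])
    then have "p = (fst p, projQ z (snd p + (cinner (fst p) a / cinner z z) *\<^sub>C z))" by simp
    with p show "p \<in> QL_graph U z"
      unfolding QL_graph_def by blast
  qed
qed

lemma closed_QL_graph:
  assumes "z \<noteq> 0" "(z, a) \<in> adjoint_graph (generator_graph U)"
  shows "closed (QL_graph U z)"
proof -
  have "continuous_on UNIV (\<lambda>p::'a \<times> 'a. (fst p, snd p + (cinner (fst p) a / cinner z z) *\<^sub>C z))"
    by (intro continuous_intros bounded_bilinear.continuous_on[OF bounded_bilinear_scaleC]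
        bounded_linear.continuous_on[OF bounded_linear_cinner_left])
       (simp add: cinner_eq_zero_iff assms(1))
  from closed_vimage[OF closed_generator_graph this]
  have "closed {p. (fst p, snd p + (cinner (fst p) a / cinner z z) *\<^sub>C z) \<in> generator_graph U}"
    by (simp add: vimage_def)
  moreover have "closed {p::'a \<times> 'a. projQ z (snd p) = snd p}"
    by (intro closed_Collect_eq continuous_intros bounded_linear.continuous_on[OF bounded_linear_projQ])
  ultimately show ?thesis by (simp add: QL_graph_eq[OF assms] closed_Int)
qed

lemma QL_graph_unique: "(y, v1) \<in> QL_graph U z \<Longrightarrow> (y, v2) \<in> QL_graph U z \<Longrightarrow> v1 = v2"
  unfolding QL_graph_def using generator_graph_unique by blast

end

section \<open>The projected dynamics\<close>

text \<open>\<open>solution\<close> is \<open>u(x, \<cdot>)\<close>, and \<open>orth t = Q u(x, t)\<close> once \<open>cinner_orth_z\<close> is known.\<close>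

locale projected_volterra = c0_semigroup U for U :: "real \<Rightarrow> 'a::chilbert \<Rightarrow> 'a" +
  fixes z a x :: 'a and f :: "real \<Rightarrow> complex"
  assumes adjoint: "(z, a) \<in> adjoint_graph (generator_graph U)"
    and z_nonzero: "z \<noteq> 0"
    and f_continuous: "continuous_on {0..} f"
    and volterra: "\<And>t. t \<ge> 0 \<Longrightarrow> f t = cinner (U t (projQ z x)) (projQ z a) / cinner z z
      - integral {0..t} (\<lambda>s. f (t - s) * (cinner (U s z) (projQ z a) / cinner z z))"
begin

definition memory :: "real \<Rightarrow> 'a" where
  "memory t = integral {0..t} (\<lambda>s. f (t - s) *\<^sub>C U s z)"

definition orth :: "real \<Rightarrow> 'a" where
  "orth t = U t (projQ z x) - memory t"

definition solution :: "real \<Rightarrow> 'a" where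
  "solution t = projP z x + orth t"

lemma continuous_memory: "continuous_on {0..} memory"
  unfolding memory_def
  by (rule continuous_on_convolution[OF bounded_bilinear_scaleC f_continuous continuous_orbit])

lemma continuous_orth: "continuous_on {0..} orth"
  unfolding orth_def by (intro continuous_intros continuous_orbit continuous_memory)

lemma continuous_f_reflect: "continuous_on {0..t} (\<lambda>s. f (t - s))"
  by (rule continuous_on_compose2[OF f_continuous]) (auto intro!: continuous_intros)

lemma integral_memory_in_generator_graph:
  assumes t: "t \<ge> 0"
  shows "(integral {0..t} memory, memory t - integral {0..t} f *\<^sub>C z) \<in> generator_graph U"
proof -
  define V where "V s = integral {0..s} (\<lambda>\<sigma>. U \<sigma> z)" for s
  have "integral {0..t} memory = integral {0..t} (\<lambda>s. f (t - s) *\<^sub>C V s)"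
    unfolding memory_def V_def
    by (rule integral_convolution[OF bounded_bilinear_scaleC f_continuous continuous_orbit t])
  moreover have "(integral {0..t} (\<lambda>s. f (t - s) *\<^sub>C V s), integral {0..t} (\<lambda>s. f (t - s) *\<^sub>C (U s z - z)))
      \<in> generator_graph U"
  proof (rule generator_graph_integral)
    show "continuous_on {0..t} (\<lambda>s. f (t - s) *\<^sub>C V s)" unfolding V_def
      by (intro bounded_bilinear.continuous_on[OF bounded_bilinear_scaleC] continuous_f_reflect
          indefinite_integral_continuous_1 integrable_orbit) simp
    show "continuous_on {0..t} (\<lambda>s. f (t - s) *\<^sub>C (U s z - z))"
      by (intro bounded_bilinear.continuous_on[OF bounded_bilinear_scaleC] continuous_f_reflect
          continuous_intros continuous_on_subset[OF continuous_orbit]) auto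
    show "(f (t - s) *\<^sub>C V s, f (t - s) *\<^sub>C (U s z - z)) \<in> generator_graph U" if "s \<in> {0..t}" for s
      unfolding V_def using that by (intro generator_graph_scaleC integral_orbit_in_generator_graph) simp
  qed
  moreover have "integral {0..t} (\<lambda>s. f (t - s) *\<^sub>C (U s z - z)) = memory t - integral {0..t} f *\<^sub>C z"
  proof -
    have int: "(\<lambda>s. f (t - s)) integrable_on {0..t}"
      by (rule integrable_continuous_real[OF continuous_f_reflect])
    have "integral {0..t} (\<lambda>s. f (t - s)) = integral {0..t} f"
      using Henstock_Kurzweil_Integration.integral_reflect_real[where a="-t" and b=0 and f="\<lambda>s. f (t + s)"]
        integral_shift_real_ivl[where f=f and a=0 and b=t and c=t]
      by (simp add: add.commute)
    moreover have "(\<lambda>s. f (t - s) *\<^sub>C U s z) integrable_on {0..t}"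
      "(\<lambda>s. f (t - s) *\<^sub>C z) integrable_on {0..t}"
      by (intro integrable_continuous_real bounded_bilinear.continuous_on[OF bounded_bilinear_scaleC]
          continuous_f_reflect continuous_on_const continuous_on_subset[OF continuous_orbit]; simp)+
    ultimately show ?thesis
      unfolding memory_def scaleC_diff_right
      using integral_bounded_linear[OF bounded_bilinear.bounded_linear_left[OF bounded_bilinear_scaleC] int]
      by (simp add: integral_diff)
  qed
  ultimately show ?thesis by simp
qed

lemma integral_orth_in_generator_graph:
  assumes t: "t \<ge> 0"
  shows "(integral {0..t} orth, orth t - projQ z x + integral {0..t} f *\<^sub>C z) \<in> generator_graph U"
proof -
  have eq: "integral {0..t} orth = integral {0..t} (\<lambda>s. U s (projQ z x)) - integral {0..t} memory"
    unfolding orth_def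
    by (intro integral_diff integrable_orbit integrable_continuous_real
        continuous_on_subset[OF continuous_memory]) auto
  from generator_graph_diff[OF integral_orbit_in_generator_graph[OF t, of "projQ z x"]
      integral_memory_in_generator_graph[OF t]]
  show ?thesis by (simp add: eq orth_def algebra_simps)
qed

lemma cinner_orth_projQ_a:
  assumes s: "s \<ge> 0"
  shows "cinner (orth s) (projQ z a) = cinner z z * f s"
proof -
  have "cinner (memory s) (projQ z a) = integral {0..s} (\<lambda>\<sigma>. f (s - \<sigma>) * cinner (U \<sigma> z) (projQ z a))"
    unfolding memory_def
    by (subst integral_bounded_linear[OF bounded_linear_cinner_left, symmetric])
       (auto intro!: integrable_continuous_real bounded_bilinear.continuous_on[OF bounded_bilinear_scaleC]
         continuous_f_reflect continuous_on_subset[OF continuous_orbit] simp: cinner_scaleC_left)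
  moreover have "cinner z z \<noteq> 0" using z_nonzero cinner_eq_zero_iff by blast
  ultimately show ?thesis
    using volterra[OF s] by (simp add: orth_def cinner_diff_left field_simps)
qed

lemma cinner_orth_z:
  assumes T: "T \<ge> 0"
  shows "cinner (orth T) z = 0"
proof -
  define g where "g t = cinner (orth t) z" for t
  define \<beta> where "\<beta> = cnj (cinner a z / cinner z z)"
  \<comment> \<open>pair the generator identity for \<open>\<integral>\<^sub>0\<^sup>t orth\<close> with \<open>z\<close> through the adjoint\<close>
  have cont_g: "continuous_on {0..} g"
    unfolding g_def by (rule bounded_linear.continuous_on[OF bounded_linear_cinner_left continuous_orth])
  have "g t = \<beta> * integral {0..t} g" if t: "t \<ge> 0" for t
  proof -
    have int_orth: "orth integrable_on {0..t}"
      by (rule integrable_continuous_real, rule continuous_on_subset[OF continuous_orth]) auto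
    have int_g: "g integrable_on {0..t}"
      by (rule integrable_continuous_real, rule continuous_on_subset[OF cont_g]) auto
    have int_f: "f integrable_on {0..t}"
      by (rule integrable_continuous_real, rule continuous_on_subset[OF f_continuous]) auto
    have "g t + cinner z z * integral {0..t} f = cinner (orth t - projQ z x + integral {0..t} f *\<^sub>C z) z"
      using cinner_projQ_self[OF z_nonzero, of x]
      by (simp add: g_def cinner_add_left cinner_diff_left cinner_scaleC_left mult.commute)
    also have "\<dots> = cinner (integral {0..t} orth) a"
      by (rule adjoint_graphD[OF adjoint integral_orth_in_generator_graph[OF t]])
    also have "\<dots> = integral {0..t} (\<lambda>s. cinner (orth s) a)"
      by (rule integral_bounded_linear[OF bounded_linear_cinner_left int_orth, symmetric])
    also have "\<dots> = integral {0..t} (\<lambda>s. \<beta> * g s + cinner z z * f s)"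
      by (intro integral_cong)
         (simp add: cinner_projP_plus_projQ[of _ a z] cinner_orth_projQ_a \<beta>_def g_def)
    also have "\<dots> = \<beta> * integral {0..t} g + cinner z z * integral {0..t} f"
      by (simp add: integral_add integrable_on_mult_right[OF int_g] integrable_on_mult_right[OF int_f])
    finally show ?thesis by simp
  qed
  from eq_mult_integral_imp_zero[OF cont_g this T] show ?thesis by (simp add: g_def)
qed

lemma projQ_orth: "t \<ge> 0 \<Longrightarrow> projQ z (orth t) = orth t"
  by (rule projQ_eq_self[OF cinner_orth_z])

lemma continuous_solution: "continuous_on {0..} solution"
  unfolding solution_def by (intro continuous_intros continuous_orth)

lemma QL_graph_integral_solution:
  assumes t: "t \<ge> 0"
  shows "(projQ z (integral {0..t} solution), solution t - x) \<in> QL_graph U z"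
proof -
  have Q_linear: "linear (projQ z)" by (rule bounded_linear.linear[OF bounded_linear_projQ])
  have "solution integrable_on {0..t}"
    by (rule integrable_continuous_real, rule continuous_on_subset[OF continuous_solution]) auto
  then have "projQ z (integral {0..t} solution) = integral {0..t} (\<lambda>s. projQ z (solution s))"
    by (rule integral_bounded_linear[OF bounded_linear_projQ, symmetric])
  also have "\<dots> = integral {0..t} orth"
    by (intro integral_cong)
       (simp add: solution_def linear_add[OF Q_linear] projQ_projP[OF z_nonzero] projQ_orth)
  finally have "projQ z (integral {0..t} solution) = integral {0..t} orth" .
  moreover have "projQ z (orth t - projQ z x + integral {0..t} f *\<^sub>C z) = solution t - x"
    using projP_plus_projQ[of z x] t
    by (simp add: linear_add[OF Q_linear] linear_diff[OF Q_linear] projQ_orth projQ_projQ[OF z_nonzero]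
        projQ_scaleC projQ_self[OF z_nonzero] solution_def algebra_simps)
  ultimately show ?thesis
    using integral_orth_in_generator_graph[OF t] unfolding QL_graph_def by force
qed

lemma mild_solution:
  "continuous_on {0..} solution \<and>
    (\<forall>t\<ge>0. projQ z (integral {0..t} solution) \<in> Domain (closure (QL_graph U z)) \<and>
      solution t = x + op_of (closure (QL_graph U z)) (projQ z (integral {0..t} solution)))"
proof -
  have "closure (QL_graph U z) = QL_graph U z"
    by (rule closure_closed[OF closed_QL_graph[OF z_nonzero adjoint]])
  moreover have "op_of (QL_graph U z) (projQ z (integral {0..t} solution)) = solution t - x" if "t \<ge> 0" for t
    using QL_graph_integral_solution[OF that] QL_graph_unique by (blast intro: op_of_eqI)
  ultimately show ?thesis
    using continuous_solution QL_graph_integral_solution by force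
qed

end

theorem theorem2:
  fixes U :: "real \<Rightarrow> 'a::chilbert \<Rightarrow> 'a"
    and z x :: 'a
    and f :: "real \<Rightarrow> complex"
    and u :: "real \<Rightarrow> 'a"
  assumes U: "C0_semigroup U"
    and z_dom: "z \<in> Domain (adjoint_graph (generator_graph U))"
    and z_nz: "z \<noteq> 0"
    and f_cont: "continuous_on {0..} f"
    and f_volterra: "\<And>t. t \<ge> 0 \<Longrightarrow>
       f t = cinner (U t (projQ z x)) (projQ z (op_of (adjoint_graph (generator_graph U)) z)) / cinner z z
             - integral {0..t} (\<lambda>s. f (t - s) *
                 (cinner (U s z) (projQ z (op_of (adjoint_graph (generator_graph U)) z)) / cinner z z))"
    and u_def: "\<And>t. t \<ge> 0 \<Longrightarrow>
       u t = projP z x + U t (projQ z x) - integral {0..t} (\<lambda>s. f (t - s) *\<^sub>C U s z)"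
  shows "continuous_on {0..} u \<and>
    (\<forall>t\<ge>0. projQ z (integral {0..t} u) \<in> Domain (closure (QL_graph U z)) \<and>
            u t = x + op_of (closure (QL_graph U z)) (projQ z (integral {0..t} u)))"
proof -
  interpret c0_semigroup U by (rule c0_semigroup.intro[OF U])
  obtain a where a: "(z, a) \<in> adjoint_graph (generator_graph U)" using z_dom by blast
  then have "op_of (adjoint_graph (generator_graph U)) z = a"
    by (blast intro: op_of_eqI adjoint_generator_graph_unique)
  note volterra = f_volterra[unfolded this]
  interpret projected_volterra U z a x f
    by (intro projected_volterra.intro projected_volterra_axioms.intro c0_semigroup.intro U a z_nz f_cont volterra)
  have u: "u t = solution t" if "t \<ge> 0" for t
    using u_def[OF that] by (simp add: solution_def orth_def memory_def)
  have "continuous_on {0..} u"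
    using continuous_on_eq[OF continuous_solution] u by simp
  moreover have "integral {0..t} u = integral {0..t} solution" for t
    by (rule integral_cong) (simp add: u)
  ultimately show ?thesis
    using mild_solution by (simp add: u)
qed

end
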